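(* Let $0\le\underline{\tau}<\overline{\tau}<\infty$, $\gamma\ge0$, let $f$ be a piecewise continuous probability density supported on $[\underline{\tau},\overline{\tau}]$, and let $\beta:[0,\infty)\to(0,\infty)$ be continuous and decreasing with $\lim_{x\to+\infty}\beta(x)=0$ and such that $x\mapsto x\beta(x)$ is Lipschitz. Assume $\delta>0$. Then every nonnegative continuous solution $x$ of $$x'(t)=-\big(\delta+\beta(x(t))\big)x(t)+2\int_{\underline{\tau}}^{\overline{\tau}}e^{-\gamma\tau}f(\tau)\beta(x(t-\tau))x(t-\tau)\,d\tau,\qquad t\ge\overline{\tau},$$ (with continuous nonnegative initial values on $[0,\overline{\tau}]$) is bounded, i.e. $\limsup_{t\to+\infty}x(t)<+\infty$. *)

theory Defs
  imports "HOL-Analysis.Analysis"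
begin

definition piecewise_continuous_on :: "real \<Rightarrow> real \<Rightarrow> (real \<Rightarrow> real) \<Rightarrow> bool" where
  "piecewise_continuous_on a b f \<longleftrightarrow>
     (\<exists>S. finite S \<and>
          (\<forall>x\<in>{a..b} - S. continuous (at x within {a..b}) f) \<and>
          (\<forall>s\<in>S. (\<exists>l. (f \<longlongrightarrow> l) (at_left s)) \<and> (\<exists>r. (f \<longlongrightarrow> r) (at_right s))))"

definition prob_density_supported_on :: "real \<Rightarrow> real \<Rightarrow> (real \<Rightarrow> real) \<Rightarrow> bool" where
  "prob_density_supported_on a b f \<longleftrightarrow>
     (\<forall>s. 0 \<le> f s) \<and> (\<forall>s. s \<notin> {a..b} \<longrightarrow> f s = 0) \<and> (f has_integral 1) {a..b}"

end

theory Submission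
  imports Defs
begin

text \<open>Since \<open>\<beta>\<close> vanishes at infinity, the birth rate \<open>y \<beta>(y)\<close> grows at most like
  \<open>\<delta> y / 4 + C\<close>. Take \<open>K\<close> above both the initial data and \<open>4C/\<delta>\<close>, and suppose \<open>x\<close> reaches
  \<open>K\<close> for a first time \<open>t\<^sub>1\<close>. Then every delayed value \<open>x(t\<^sub>1 - \<tau>)\<close> is at most \<open>X = x(t\<^sub>1)\<close>,
  so the delay integral is at most \<open>\<delta> X / 4 + C\<close> and \<open>x'(t\<^sub>1) \<le> -\<delta> X / 2 + 2C < 0\<close>.
  Hence \<open>x\<close> was larger than \<open>K\<close> just before \<open>t\<^sub>1\<close>, contradicting minimality.\<close>

lemma mult_vanishing_le_linear:
  fixes \<beta> :: "real \<Rightarrow> real"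
  assumes "(\<beta> \<longlongrightarrow> 0) at_top" and "0 < \<epsilon>"
    and "\<forall>y\<ge>0. 0 \<le> \<beta> y"
    and "\<forall>y z. 0 \<le> y \<longrightarrow> y \<le> z \<longrightarrow> \<beta> z \<le> \<beta> y"
  obtains C where "0 \<le> C" "\<And>y. 0 \<le> y \<Longrightarrow> y * \<beta> y \<le> \<epsilon> * y + C"
proof -
  obtain Y0 where "\<And>y. y \<ge> Y0 \<Longrightarrow> \<beta> y < \<epsilon>"
    using order_tendstoD(2)[OF assms(1) assms(2)] by (auto simp: eventually_at_top_linorder)
  then obtain Y where Y: "0 \<le> Y" "\<And>y. y \<ge> Y \<Longrightarrow> \<beta> y < \<epsilon>"
    by (metis max.cobounded2 max.boundedE)
  have C0: "0 \<le> Y * \<beta> 0" using Y(1) assms(3) by simp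
  show ?thesis
  proof (rule that[OF C0])
    fix y :: real assume y: "0 \<le> y"
    show "y * \<beta> y \<le> \<epsilon> * y + Y * \<beta> 0"
    proof (cases "y \<ge> Y")
      case True
      then have "y * \<beta> y \<le> y * \<epsilon>" using Y(2) y by (intro mult_left_mono) (auto intro: less_imp_le)
      then show ?thesis using C0 by (simp add: mult.commute)
    next
      case False
      have "y * \<beta> y \<le> Y * \<beta> y" using False y assms(3) by (simp add: mult_right_mono)
      also have "\<dots> \<le> Y * \<beta> 0" using Y(1) y assms(4) by (simp add: mult_left_mono)
      finally show ?thesis using y assms(2) mult_nonneg_nonneg[of \<epsilon> y] by linarith
    qed
  qed
qed

lemma integral_le_density_mult:
  fixes f h :: "real \<Rightarrow> real"
  assumes "(f has_integral 1) S" and "0 \<le> M"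
    and "\<And>s. s \<in> S \<Longrightarrow> h s \<le> f s * M"
  shows "integral S h \<le> M"
proof (cases "h integrable_on S")
  case True
  have fM: "((\<lambda>s. f s * M) has_integral M) S"
    using has_integral_mult_left[OF assms(1)] by simp
  show ?thesis
    using integral_le[OF True has_integral_integrable[OF fM] assms(3)] integral_unique[OF assms(1)]
    by simp
qed (simp add: not_integrable_integral assms(2))

lemma barrier_not_reached:
  fixes x :: "real \<Rightarrow> real"
  assumes cont: "continuous_on {T..} x" and start: "x T < K"
    and decr: "\<And>t. T < t \<Longrightarrow> K \<le> x t \<Longrightarrow> \<forall>s\<in>{T..<t}. x s < K \<Longrightarrow>
                   \<exists>D<0. (x has_real_derivative D) (at t within {T..})"
    and "T \<le> t"
  shows "x t < K"
proof (rule ccontr)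
  assume "\<not> x t < K"
  define S where "S = {T..t} \<inter> x -` {K..}"
  have "closed S"
    unfolding S_def by (rule continuous_closed_preimage) (use continuous_on_subset[OF cont] in auto)
  moreover have "t \<in> S" using \<open>\<not> x t < K\<close> \<open>T \<le> t\<close> by (auto simp: S_def)
  moreover have bdd: "bdd_below S" unfolding S_def by (auto intro: bdd_belowI[of _ T])
  ultimately have "Inf S \<in> S" using closed_contains_Inf by blast
  define t1 where "t1 = Inf S"
  have t1: "T \<le> t1" "K \<le> x t1" using \<open>Inf S \<in> S\<close> by (auto simp: S_def t1_def)
  have t1_gt: "T < t1" using t1 start by (metis order.order_iff_strict not_le)
  have before: "x s < K" if "s \<in> {T..<t1}" for s
  proof -
    have "s \<notin> S" using that cInf_lower[OF _ bdd] by (force simp: t1_def)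
    then show ?thesis using that \<open>Inf S \<in> S\<close> by (auto simp: S_def t1_def)
  qed
  obtain D where "D < 0" and deriv: "(x has_real_derivative D) (at t1 within {T..})"
    using decr[OF t1_gt t1(2)] before by blast
  from deriv have "(x has_real_derivative D) (at t1 within {T<..})"
    by (rule DERIV_subset) auto
  then have "(x has_real_derivative D) (at t1)"
    using at_within_open[of t1 "{T<..}"] t1_gt by simp
  then obtain d where "d > 0" and d: "\<And>h. 0 < h \<Longrightarrow> h < d \<Longrightarrow> x t1 < x (t1 - h)"
    using DERIV_neg_dec_left \<open>D < 0\<close> by blast
  define h where "h = min (d/2) (t1 - T)"
  have "x t1 < x (t1 - h)" using d \<open>d > 0\<close> t1_gt by (simp add: h_def)
  moreover have "x (t1 - h) < K" using before \<open>d > 0\<close> t1_gt by (simp add: h_def)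
  ultimately show False using t1 by simp
qed

lemma delay_rhs_neg_at_window_max:
  fixes tl tu \<gamma> \<delta> C X :: real and f \<beta> u :: "real \<Rightarrow> real"
  assumes "0 \<le> tl" "0 \<le> \<gamma>" "0 < \<delta>" "0 \<le> C"
    and "prob_density_supported_on tl tu f"
    and "\<forall>y\<ge>0. 0 < \<beta> y"
    and "\<And>y. 0 \<le> y \<Longrightarrow> y * \<beta> y \<le> \<delta>/4 * y + C"
    and "4 * C / \<delta> < X"
    and window: "\<forall>s\<in>{tl..tu}. 0 \<le> u s \<and> u s \<le> X"
  shows "- (\<delta> + \<beta> X) * X
           + 2 * integral {tl..tu} (\<lambda>s. exp (- \<gamma> * s) * f s * \<beta> (u s) * u s) < 0"
proof -
  have f: "\<And>s. 0 \<le> f s" "(f has_integral 1) {tl..tu}"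
    using assms(5) by (auto simp: prob_density_supported_on_def)
  have X0: "0 \<le> X" using assms(3,4,8) by (smt (verit) divide_nonneg_pos)
  have "integral {tl..tu} (\<lambda>s. exp (- \<gamma> * s) * f s * \<beta> (u s) * u s) \<le> \<delta>/4 * X + C"
  proof (rule integral_le_density_mult[OF f(2)])
    show "0 \<le> \<delta>/4 * X + C" using assms(3,4) X0 by simp
    fix s assume s: "s \<in> {tl..tu}"
    have u: "0 \<le> u s" "u s \<le> X" using window s by auto
    have "0 \<le> u s * \<beta> (u s)" using u assms(6) by (simp add: less_imp_le)
    moreover have "exp (- \<gamma> * s) \<le> 1" using assms(1,2) s by auto
    ultimately have "exp (- \<gamma> * s) * (f s * (u s * \<beta> (u s))) \<le> f s * (u s * \<beta> (u s))"
      using f(1) by (simp add: mult_left_le_one_le)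
    also have "\<dots> \<le> f s * (\<delta>/4 * X + C)"
    proof (rule mult_left_mono[OF _ f(1)])
      have "\<delta>/4 * u s \<le> \<delta>/4 * X" using u(2) assms(3) by simp
      then show "u s * \<beta> (u s) \<le> \<delta>/4 * X + C" using assms(7)[OF u(1)] by linarith
    qed
    finally show "exp (- \<gamma> * s) * f s * \<beta> (u s) * u s \<le> f s * (\<delta>/4 * X + C)"
      by (simp add: ac_simps)
  qed
  moreover have "0 \<le> \<beta> X * X" using X0 assms(6) by (simp add: less_imp_le)
  moreover have "4 * C < \<delta> * X" using assms(3,8) by (simp add: field_simps)
  ultimately show ?thesis by (simp add: algebra_simps)
qed

theorem proposition2p2:
  fixes tl tu \<gamma> \<delta> :: real
    and f \<beta> x :: "real \<Rightarrow> real"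
  assumes "0 \<le> tl" "tl < tu" "0 \<le> \<gamma>" "0 < \<delta>"
    and "piecewise_continuous_on tl tu f"
    and "prob_density_supported_on tl tu f"
    and "continuous_on {0..} \<beta>"
    and "\<forall>y\<ge>0. 0 < \<beta> y"
    and "\<forall>y z. 0 \<le> y \<longrightarrow> y \<le> z \<longrightarrow> \<beta> z \<le> \<beta> y"
    and "(\<beta> \<longlongrightarrow> 0) at_top"
    and "\<exists>L. L-lipschitz_on {0..} (\<lambda>y. y * \<beta> y)"
    and "continuous_on {0..} x"
    and "\<forall>t\<ge>0. 0 \<le> x t"
    and "\<forall>t\<ge>tu. (x has_real_derivative
            (- (\<delta> + \<beta> (x t)) * x t
             + 2 * integral {tl..tu} (\<lambda>s. exp (- \<gamma> * s) * f s * \<beta> (x (t - s)) * x (t - s))))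
           (at t within {tu..})"
  shows "Limsup at_top (\<lambda>t. ereal (x t)) < \<infinity>"
proof -
  obtain C where C: "0 \<le> C" "\<And>y. 0 \<le> y \<Longrightarrow> y * \<beta> y \<le> \<delta>/4 * y + C"
    using mult_vanishing_le_linear[OF assms(10), of "\<delta>/4"] assms(4,8,9) by (auto simp: less_imp_le)
  obtain M where M: "\<And>t. t \<in> {0..tu} \<Longrightarrow> x t \<le> M"
    using continuous_attains_sup[OF compact_Icc _ continuous_on_subset[OF assms(12)], of 0 tu]
      assms(1,2) by fastforce
  define K where "K = max M (4 * C / \<delta>) + 1"
  have "x t < K" if "tu \<le> t" for t
  proof (rule barrier_not_reached[OF continuous_on_subset[OF assms(12)] _ _ that])
    show "x tu < K" using M[of tu] assms(1,2) by (simp add: K_def)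
    fix t1 assume t1: "tu < t1" "K \<le> x t1" and before: "\<forall>s\<in>{tu..<t1}. x s < K"
    have "0 \<le> x (t1 - s) \<and> x (t1 - s) \<le> x t1" if s: "s \<in> {tl..tu}" for s
    proof
      show "0 \<le> x (t1 - s)" using s t1(1) assms(13) by simp
      consider "t1 - s < tu" | "s = 0" | "t1 - s \<in> {tu..<t1}" using s assms(1) by fastforce
      then show "x (t1 - s) \<le> x t1"
        using M[of "t1 - s"] before[rule_format, of "t1 - s"] s t1 by cases (auto simp: K_def)
    qed
    then have "- (\<delta> + \<beta> (x t1)) * x t1
        + 2 * integral {tl..tu} (\<lambda>s. exp (- \<gamma> * s) * f s * \<beta> (x (t1 - s)) * x (t1 - s)) < 0"
      using delay_rhs_neg_at_window_max[OF assms(1,3,4) C(1) assms(6,8) C(2)] t1(2)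
      by (simp add: K_def)
    then show "\<exists>D<0. (x has_real_derivative D) (at t1 within {tu..})"
      using assms(14) t1(1) by auto
  qed (use assms(1,2) in auto)
  then have "Limsup at_top (\<lambda>t. ereal (x t)) \<le> ereal K"
    by (intro Limsup_bounded) (auto simp: eventually_at_top_linorder intro: less_imp_le)
  then show ?thesis using le_less_trans by fastforce
qed

end
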